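(* Let $(H,\mu_H,\Delta_H,\alpha_H)$ be a Hom-bialgebra and $(A,\mu_A,\alpha_A)$ a left $H$-module Hom-algebra with action $h\otimes a\mapsto h\cdot a$, and assume $\alpha_H$ and $\alpha_A$ are bijective. Define $R:H\otimes A\to A\otimes H$ by $R(h\otimes a)=\alpha_H^{-2}(h_1)\cdot\alpha_A^{-1}(a)\otimes\alpha_H^{-1}(h_2)$. Then $R$ is a Hom-twisting map between $A$ and $H$. Consequently $A\# H:=A\otimes_R H$ is a Hom-associative algebra with structure map $\alpha_A\otimes\alpha_H$ and multiplication $(a\# h)(a'\# h')=a(\alpha_H^{-2}(h_1)\cdot\alpha_A^{-1}(a'))\#\alpha_H^{-1}(h_2)h'$.
   Context: Algebras/coalgebras over a field $k$, not assumed (co)unital; $\Delta(h)=h_1\otimes h_2$ (Sweedler notation). A Hom-associative algebra is $(A,\mu,\alpha)$ with $\alpha(aa')=\alpha(a)\alpha(a')$, $\alpha(a)(a'a'')=(aa')\alpha(a'')$. A Hom-bialgebra is $(H,\mu,\Delta,\alpha)$ with $(H,\mu,\alpha)$ Hom-associative and $\Delta:H\to H\otimes H$ linear such that $\Delta(h_1)\otimes\alpha(h_2)=\alpha(h_1)\otimes\Delta(h_2)$, $\Delta(hh')=h_1h'_1\otimes h_2h'_2$, $\Delta(\alpha(h))=\alpha(h_1)\otimes\alpha(h_2)$. A left $H$-module Hom-algebra is a Hom-associative algebra $(A,\mu_A,\alpha_A)$ with a linear map $H\otimes A\to A$, $h\otimes a\mapsto h\cdot a$, such that $\alpha_A(h\cdot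 a)=\alpha_H(h)\cdot\alpha_A(a)$, $\alpha_H(h)\cdot(h'\cdot a)=(hh')\cdot\alpha_A(a)$, and $\alpha_H^2(h)\cdot(aa')=(h_1\cdot a)(h_2\cdot a')$. For Hom-associative algebras $(A,\mu_A,\alpha_A),(B,\mu_B,\alpha_B)$, a Hom-twisting map is a linear $R:B\otimes A\to A\otimes B$ with $(\alpha_A\otimes\alpha_B)\circ R=R\circ(\alpha_B\otimes\alpha_A)$, $R\circ(\alpha_B\otimes\mu_A)=(\mu_A\otimes\alpha_B)\circ(\mathrm{id}_A\otimes R)\circ(R\otimes\mathrm{id}_A)$, $R\circ(\mu_B\otimes\alpha_A)=(\alpha_A\otimes\mu_B)\circ(R\otimes\mathrm{id}_B)\circ(\mathrm{id}_B\otimes R)$; $A\otimes_RB$ is $A\otimes B$ with product $(\mu_A\otimes\mu_B)\circ(\mathrm{id}_A\otimes R\otimes\mathrm{id}_B)$ and structure map $\alpha_A\otimes\alpha_B$ (a Hom-associative algebra). $a\# h$ denotes $a\otimes h$. *)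

theory Defs
  imports Complex_Main
begin

text \<open>Tensor products are not available in the
  library; an element of X (x) Y is represented by a finite list of pairs [(x1,y1),...]
  standing for the sum x1 (x) y1 + ... (scalars are absorbed into the first factor), and two
  such representatives are identified iff every bilinear form X x Y -> k takes the same
  value on them (over a field this is exactly equality in X (x) Y).  Likewise for triple
  tensors with trilinear forms.\<close>

definition lin :: "('k::field \<Rightarrow> 'x::ab_group_add \<Rightarrow> 'x) \<Rightarrow> ('k \<Rightarrow> 'y::ab_group_add \<Rightarrow> 'y)
    \<Rightarrow> ('x \<Rightarrow> 'y) \<Rightarrow> bool" where
  "lin sX sY f \<longleftrightarrow> (\<forall>c x x'. f (sX c x + x') = sY c (f x) + f x')"

definition bilin :: "('k::field \<Rightarrow> 'x::ab_group_add \<Rightarrow> 'x) \<Rightarrow> ('k \<Rightarrow> 'y::ab_group_add \<Rightarrow> 'y)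
    \<Rightarrow> ('k \<Rightarrow> 'z::ab_group_add \<Rightarrow> 'z) \<Rightarrow> ('x \<Rightarrow> 'y \<Rightarrow> 'z) \<Rightarrow> bool" where
  "bilin sX sY sZ f \<longleftrightarrow> (\<forall>y. lin sX sZ (\<lambda>x. f x y)) \<and> (\<forall>x. lin sY sZ (f x))"

definition trilin :: "('k::field \<Rightarrow> 'x::ab_group_add \<Rightarrow> 'x) \<Rightarrow> ('k \<Rightarrow> 'y::ab_group_add \<Rightarrow> 'y)
    \<Rightarrow> ('k \<Rightarrow> 'z::ab_group_add \<Rightarrow> 'z) \<Rightarrow> ('x \<Rightarrow> 'y \<Rightarrow> 'z \<Rightarrow> 'k) \<Rightarrow> bool" where
  "trilin sX sY sZ f \<longleftrightarrow> (\<forall>y z. lin sX (*) (\<lambda>x. f x y z)) \<and> (\<forall>x z. lin sY (*) (\<lambda>y. f x y z))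
      \<and> (\<forall>x y. lin sZ (*) (\<lambda>z. f x y z))"

definition teq2 :: "('k::field \<Rightarrow> 'x::ab_group_add \<Rightarrow> 'x) \<Rightarrow> ('k \<Rightarrow> 'y::ab_group_add \<Rightarrow> 'y)
    \<Rightarrow> ('x \<times> 'y) list \<Rightarrow> ('x \<times> 'y) list \<Rightarrow> bool" where
  "teq2 sX sY xs ys \<longleftrightarrow> (\<forall>\<phi>. bilin sX sY (*) \<phi> \<longrightarrow>
      sum_list (map (\<lambda>(x,y). \<phi> x y) xs) = sum_list (map (\<lambda>(x,y). \<phi> x y) ys))"

definition teq3 :: "('k::field \<Rightarrow> 'x::ab_group_add \<Rightarrow> 'x) \<Rightarrow> ('k \<Rightarrow> 'y::ab_group_add \<Rightarrow> 'y)
    \<Rightarrow> ('k \<Rightarrow> 'z::ab_group_add \<Rightarrow> 'z)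
    \<Rightarrow> ('x \<times> 'y \<times> 'z) list \<Rightarrow> ('x \<times> 'y \<times> 'z) list \<Rightarrow> bool" where
  "teq3 sX sY sZ xs ys \<longleftrightarrow> (\<forall>\<phi>. trilin sX sY sZ \<phi> \<longrightarrow>
      sum_list (map (\<lambda>(x,y,z). \<phi> x y z) xs) = sum_list (map (\<lambda>(x,y,z). \<phi> x y z) ys))"

definition tscale :: "('k \<Rightarrow> 'x \<Rightarrow> 'x) \<Rightarrow> 'k \<Rightarrow> ('x \<times> 'y) list \<Rightarrow> ('x \<times> 'y) list" where
  "tscale sX c xs = map (\<lambda>(x,y). (sX c x, y)) xs"

definition hom_assoc_alg :: "('k::field \<Rightarrow> 'a::ab_group_add \<Rightarrow> 'a) \<Rightarrow> ('a \<Rightarrow> 'a \<Rightarrow> 'a)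
    \<Rightarrow> ('a \<Rightarrow> 'a) \<Rightarrow> bool" where
  "hom_assoc_alg s m \<alpha> \<longleftrightarrow> vector_space s \<and> bilin s s s m \<and> lin s s \<alpha>
     \<and> (\<forall>a a'. \<alpha> (m a a') = m (\<alpha> a) (\<alpha> a'))
     \<and> (\<forall>a a' a''. m (\<alpha> a) (m a' a'') = m (m a a') (\<alpha> a''))"

definition hom_bialg :: "('k::field \<Rightarrow> 'h::ab_group_add \<Rightarrow> 'h) \<Rightarrow> ('h \<Rightarrow> 'h \<Rightarrow> 'h)
    \<Rightarrow> ('h \<Rightarrow> ('h \<times> 'h) list) \<Rightarrow> ('h \<Rightarrow> 'h) \<Rightarrow> bool" where
  "hom_bialg s m \<Delta> \<alpha> \<longleftrightarrow> hom_assoc_alg s m \<alpha>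
     \<and> (\<forall>c h h'. teq2 s s (\<Delta> (s c h + h')) (tscale s c (\<Delta> h) @ \<Delta> h'))
     \<and> (\<forall>h. teq3 s s s [(u, v, \<alpha> y). (x,y) \<leftarrow> \<Delta> h, (u,v) \<leftarrow> \<Delta> x]
                      [(\<alpha> x, u, v). (x,y) \<leftarrow> \<Delta> h, (u,v) \<leftarrow> \<Delta> y])
     \<and> (\<forall>h h'. teq2 s s (\<Delta> (m h h')) [(m x x', m y y'). (x,y) \<leftarrow> \<Delta> h, (x',y') \<leftarrow> \<Delta> h'])
     \<and> (\<forall>h. teq2 s s (\<Delta> (\<alpha> h)) [(\<alpha> x, \<alpha> y). (x,y) \<leftarrow> \<Delta> h])"

definition module_hom_alg :: "('k::field \<Rightarrow> 'h::ab_group_add \<Rightarrow> 'h) \<Rightarrow> ('h \<Rightarrow> 'h \<Rightarrow> 'h)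
    \<Rightarrow> ('h \<Rightarrow> ('h \<times> 'h) list) \<Rightarrow> ('h \<Rightarrow> 'h)
    \<Rightarrow> ('k \<Rightarrow> 'a::ab_group_add \<Rightarrow> 'a) \<Rightarrow> ('a \<Rightarrow> 'a \<Rightarrow> 'a) \<Rightarrow> ('a \<Rightarrow> 'a)
    \<Rightarrow> ('h \<Rightarrow> 'a \<Rightarrow> 'a) \<Rightarrow> bool" where
  "module_hom_alg sH mH \<Delta> \<alpha>H sA mA \<alpha>A act \<longleftrightarrow> hom_assoc_alg sA mA \<alpha>A
     \<and> bilin sH sA sA act
     \<and> (\<forall>h a. \<alpha>A (act h a) = act (\<alpha>H h) (\<alpha>A a))
     \<and> (\<forall>h h' a. act (\<alpha>H h) (act h' a) = act (mH h h') (\<alpha>A a))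
     \<and> (\<forall>h a a'. act (\<alpha>H (\<alpha>H h)) (mA a a') =
                 sum_list (map (\<lambda>(x,y). mA (act x a) (act y a')) (\<Delta> h)))"

text \<open>Hom-twisting map R : B (x) A -> A (x) B, given on pure tensors (R b a represents
  R(b (x) a)); it is required to be bilinear, i.e. to induce a linear map on B (x) A.
  The identities of linear maps on B (x) A (x) A resp. B (x) B (x) A are stated on pure
  tensors, which span.\<close>
definition hom_twisting :: "('k::field \<Rightarrow> 'a::ab_group_add \<Rightarrow> 'a) \<Rightarrow> ('a \<Rightarrow> 'a \<Rightarrow> 'a) \<Rightarrow> ('a \<Rightarrow> 'a)
    \<Rightarrow> ('k \<Rightarrow> 'b::ab_group_add \<Rightarrow> 'b) \<Rightarrow> ('b \<Rightarrow> 'b \<Rightarrow> 'b) \<Rightarrow> ('b \<Rightarrow> 'b)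
    \<Rightarrow> ('b \<Rightarrow> 'a \<Rightarrow> ('a \<times> 'b) list) \<Rightarrow> bool" where
  "hom_twisting sA mA \<alpha>A sB mB \<alpha>B R \<longleftrightarrow>
     (\<forall>c b b' a. teq2 sA sB (R (sB c b + b') a) (tscale sA c (R b a) @ R b' a))
   \<and> (\<forall>c b a a'. teq2 sA sB (R b (sA c a + a')) (tscale sA c (R b a) @ R b a'))
   \<and> (\<forall>b a. teq2 sA sB [(\<alpha>A x, \<alpha>B y). (x,y) \<leftarrow> R b a] (R (\<alpha>B b) (\<alpha>A a)))
   \<and> (\<forall>b a a'. teq2 sA sB (R (\<alpha>B b) (mA a a'))
                 [(mA x u, \<alpha>B v). (x,y) \<leftarrow> R b a, (u,v) \<leftarrow> R y a'])
   \<and> (\<forall>b b' a. teq2 sA sB (R (mB b b') (\<alpha>A a))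
                 [(\<alpha>A x, mB y v). (u,v) \<leftarrow> R b' a, (x,y) \<leftarrow> R b u])"

definition twisted_mult :: "('a \<Rightarrow> 'a \<Rightarrow> 'a) \<Rightarrow> ('b \<Rightarrow> 'b \<Rightarrow> 'b) \<Rightarrow> ('b \<Rightarrow> 'a \<Rightarrow> ('a \<times> 'b) list)
    \<Rightarrow> ('a \<times> 'b) list \<Rightarrow> ('a \<times> 'b) list \<Rightarrow> ('a \<times> 'b) list" where
  "twisted_mult mA mB R xs ys = [(mA a x, mB y b'). (a,b) \<leftarrow> xs, (a',b') \<leftarrow> ys, (x,y) \<leftarrow> R b a']"

definition hom_assoc_tensor_alg :: "('k::field \<Rightarrow> 'x::ab_group_add \<Rightarrow> 'x) \<Rightarrow> ('k \<Rightarrow> 'y::ab_group_add \<Rightarrow> 'y)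
    \<Rightarrow> (('x \<times> 'y) list \<Rightarrow> ('x \<times> 'y) list \<Rightarrow> ('x \<times> 'y) list) \<Rightarrow> ('x \<Rightarrow> 'x) \<Rightarrow> ('y \<Rightarrow> 'y) \<Rightarrow> bool" where
  "hom_assoc_tensor_alg sX sY M f g \<longleftrightarrow>
     (let T = (\<lambda>xs. map (\<lambda>(x,y). (f x, g y)) xs) in
       (\<forall>xs xs' ys ys'. teq2 sX sY xs xs' \<longrightarrow> teq2 sX sY ys ys' \<longrightarrow> teq2 sX sY (M xs ys) (M xs' ys'))
     \<and> (\<forall>xs xs'. teq2 sX sY xs xs' \<longrightarrow> teq2 sX sY (T xs) (T xs'))
     \<and> (\<forall>xs ys. teq2 sX sY (T (M xs ys)) (M (T xs) (T ys)))
     \<and> (\<forall>xs ys zs. teq2 sX sY (M (T xs) (M ys zs)) (M (M xs ys) (T zs))))"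

definition smash_R :: "('h \<Rightarrow> ('h \<times> 'h) list) \<Rightarrow> ('h \<Rightarrow> 'h) \<Rightarrow> ('a \<Rightarrow> 'a) \<Rightarrow> ('h \<Rightarrow> 'a \<Rightarrow> 'a)
    \<Rightarrow> 'h \<Rightarrow> 'a \<Rightarrow> ('a \<times> 'h) list" where
  "smash_R \<Delta> \<alpha>H \<alpha>A act h a =
     [(act (inv \<alpha>H (inv \<alpha>H x)) (inv \<alpha>A a), inv \<alpha>H y). (x,y) \<leftarrow> \<Delta> h]"

end

theory Submission
  imports Defs
begin

text \<open>Tensors are lists of pairs modulo all bilinear forms, so every identity between tensors
  is proved by applying an arbitrary bilinear form and computing with finite sums.
  For any Hom-twisting map R the product of A \<otimes>_R B is Hom-associative: both sides of the
  Hom-associativity identity reduce, by the two multiplicativity axioms of R, to the same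
  quadruple sum up to reordering of the summations.
  The smash map R(h \<otimes> a) = \<alpha>^-2(h_1) \<cdot> \<alpha>^-1(a) \<otimes> \<alpha>^-1(h_2) is such a twisting map:
  its compatibility with the product of A comes from the module-algebra axiom together with
  Hom-coassociativity of \<Delta>, and its compatibility with the product of H from
  multiplicativity of \<Delta> together with \<alpha>(h) \<cdot> (h' \<cdot> a) = (hh') \<cdot> \<alpha>(a).\<close>

definition pair_sum :: "('x \<Rightarrow> 'y \<Rightarrow> 'c::comm_monoid_add) \<Rightarrow> ('x \<times> 'y) list \<Rightarrow> 'c" where
  "pair_sum f xs = sum_list (map (\<lambda>(x,y). f x y) xs)"

lemma pair_sum_Nil [simp]: "pair_sum f [] = 0"
  by (simp add: pair_sum_def)

lemma pair_sum_Cons [simp]: "pair_sum f (p # xs) = f (fst p) (snd p) + pair_sum f xs"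
  by (cases p) (simp add: pair_sum_def)

lemma pair_sum_append [simp]: "pair_sum f (xs @ ys) = pair_sum f xs + pair_sum f ys"
  by (simp add: pair_sum_def)

lemma pair_sum_map [simp]:
  "pair_sum f (map (\<lambda>(x,y). (g x y, h x y)) xs) = pair_sum (\<lambda>x y. f (g x y) (h x y)) xs"
  by (induct xs) auto

lemma pair_sum_concat_map [simp]:
  "pair_sum f (concat (map (\<lambda>(x,y). F x y) xs)) = pair_sum (\<lambda>x y. pair_sum f (F x y)) xs"
  by (induct xs) auto

lemma pair_sum_cong: "(\<And>x y. f x y = g x y) \<Longrightarrow> pair_sum f xs = pair_sum g xs"
  by (metis ext)

lemma pair_sum_add: "pair_sum (\<lambda>x y. f x y + g x y) xs = pair_sum f xs + pair_sum g xs"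
  by (induct xs) (auto simp: algebra_simps)

lemma pair_sum_mult_left: "pair_sum (\<lambda>x y. (c::'c::semiring_0) * f x y) xs = c * pair_sum f xs"
  by (induct xs) (auto simp: algebra_simps)

lemma pair_sum_linear [simp]:
  "pair_sum (\<lambda>x y. (c::'c::semiring_0) * f x y + g x y) xs = c * pair_sum f xs + pair_sum g xs"
  by (simp add: pair_sum_add pair_sum_mult_left)

lemma pair_sum_swap:
  "pair_sum (\<lambda>x y. pair_sum (\<lambda>u v. F x y u v) ys) xs = pair_sum (\<lambda>u v. pair_sum (\<lambda>x y. F x y u v) xs) ys"
proof (induct xs)
  case Nil
  then show ?case by (induct ys) auto
next
  case (Cons p xs)
  then show ?case by (simp add: pair_sum_add)
qed

lemma sum_list_triples_concat_map:
  "sum_list (map (\<lambda>(x,y,z). \<Phi> x y z)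
      (concat (map (\<lambda>(x,y). map (\<lambda>(u,v). (f x y u v, g x y u v, k x y u v)) (F x y)) xs)))
   = pair_sum (\<lambda>x y. pair_sum (\<lambda>u v. \<Phi> (f x y u v) (g x y u v) (k x y u v)) (F x y)) xs"
proof -
  have inner: "sum_list (map (\<lambda>(x,y,z). \<Phi> x y z) (map (\<lambda>(u,v). (f a b u v, g a b u v, k a b u v)) L))
      = pair_sum (\<lambda>u v. \<Phi> (f a b u v) (g a b u v) (k a b u v)) L" for a b L
    by (induct L) auto
  show ?thesis
  proof (induct xs)
    case (Cons p xs)
    then show ?case using inner by (cases p) simp
  qed simp
qed

lemma teq2_iff_pair_sum:
  "teq2 sX sY xs ys \<longleftrightarrow> (\<forall>\<phi>. bilin sX sY (*) \<phi> \<longrightarrow> pair_sum \<phi> xs = pair_sum \<phi> ys)"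
  unfolding teq2_def pair_sum_def by simp

lemma teq2_pair_sum_eq: "teq2 sX sY xs ys \<Longrightarrow> bilin sX sY (*) \<phi> \<Longrightarrow> pair_sum \<phi> xs = pair_sum \<phi> ys"
  unfolding teq2_iff_pair_sum by blast

lemma lin_apply: "lin s t f \<Longrightarrow> f (s c x + x') = t c (f x) + f x'"
  unfolding lin_def by blast

lemma lin_add:
  assumes "vector_space s" "vector_space t" "lin s t f"
  shows "f (x + y) = f x + f y"
proof -
  have "f (s 1 x + y) = t 1 (f x) + f y" using assms(3) by (rule lin_apply)
  then show ?thesis using assms(1,2) unfolding vector_space_def by simp
qed

lemma lin_zero:
  assumes "vector_space s" "vector_space t" "lin s t f"
  shows "f 0 = 0"
  using lin_add[OF assms, of 0 0] by simp

lemma lin_scale: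
  assumes "vector_space s" "vector_space t" "lin s t f"
  shows "f (s c x) = t c (f x)"
  using lin_apply[OF assms(3), of c x 0] lin_zero[OF assms] by simp

lemma vector_space_field_mult: "vector_space ((*) :: 'k::field \<Rightarrow> 'k \<Rightarrow> 'k)"
  unfolding vector_space_def by (simp add: algebra_simps)

lemma lin_pair_sum:
  assumes "vector_space s" "lin s ((*)::'k::field \<Rightarrow> _) f"
  shows "f (pair_sum F xs) = pair_sum (\<lambda>x y. f (F x y)) xs"
  by (induct xs)
    (simp_all add: lin_zero[OF assms(1) vector_space_field_mult assms(2)]
      lin_add[OF assms(1) vector_space_field_mult assms(2)])

lemma lin_inv:
  assumes "lin s s f" "bij f"
  shows "lin s s (inv f)"
  unfolding lin_def
proof (intro allI)
  fix c x x'
  have "f (s c (inv f x) + inv f x') = s c x + x'"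
    using lin_apply[OF assms(1)] assms(2) by (simp add: bij_is_surj surj_f_inv_f)
  then show "inv f (s c x + x') = s c (inv f x) + inv f x'"
    using assms(2) by (metis bij_is_inj inv_f_f)
qed

lemma bilin_apply_left: "bilin s1 s2 s3 f \<Longrightarrow> f (s1 c x + x') y = s3 c (f x y) + f x' y"
  unfolding bilin_def lin_def by blast

lemma bilin_apply_right: "bilin s1 s2 s3 f \<Longrightarrow> f y (s2 c x + x') = s3 c (f y x) + f y x'"
  unfolding bilin_def lin_def by blast

lemma bilin_scale_left:
  "bilin s1 s2 (*) f \<Longrightarrow> vector_space s1 \<Longrightarrow> f (s1 c x) y = c * f x y"
  using lin_scale[OF _ vector_space_field_mult, of s1 "\<lambda>x. f x y"] unfolding bilin_def by blast

lemma bilin_pair_sum_left: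
  "bilin s1 s2 (*) f \<Longrightarrow> vector_space s1 \<Longrightarrow> f (pair_sum F xs) y = pair_sum (\<lambda>u v. f (F u v) y) xs"
  using lin_pair_sum[of s1 "\<lambda>x. f x y"] unfolding bilin_def by blast

lemma pair_sum_tscale:
  "bilin s1 s2 (*) \<phi> \<Longrightarrow> vector_space s1 \<Longrightarrow> pair_sum \<phi> (tscale s1 c xs) = c * pair_sum \<phi> xs"
  by (simp add: tscale_def bilin_scale_left pair_sum_mult_left)

lemma pair_sum_twisted_mult:
  "pair_sum \<phi> (twisted_mult mA mB R xs ys)
   = pair_sum (\<lambda>a b. pair_sum (\<lambda>a' b'. pair_sum (\<lambda>x y. \<phi> (mA a x) (mB y b')) (R b a')) ys) xs"
  by (simp add: twisted_mult_def)

locale hom_assoc_pair =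
  fixes sA :: "'k::field \<Rightarrow> 'a::ab_group_add \<Rightarrow> 'a" and mA :: "'a \<Rightarrow> 'a \<Rightarrow> 'a" and \<alpha>A :: "'a \<Rightarrow> 'a"
    and sB :: "'k \<Rightarrow> 'b::ab_group_add \<Rightarrow> 'b" and mB :: "'b \<Rightarrow> 'b \<Rightarrow> 'b" and \<alpha>B :: "'b \<Rightarrow> 'b"
  assumes alg_A: "hom_assoc_alg sA mA \<alpha>A" and alg_B: "hom_assoc_alg sB mB \<alpha>B"
begin

lemma vector_space_A: "vector_space sA" and vector_space_B: "vector_space sB"
  using alg_A alg_B unfolding hom_assoc_alg_def by blast+

lemma \<alpha>A_mult [simp]: "\<alpha>A (mA a a') = mA (\<alpha>A a) (\<alpha>A a')"
  and mA_hom_assoc [simp]: "mA (\<alpha>A a) (mA a' a'') = mA (mA a a') (\<alpha>A a'')"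
  using alg_A unfolding hom_assoc_alg_def by blast+

lemma \<alpha>B_mult [simp]: "\<alpha>B (mB b b') = mB (\<alpha>B b) (\<alpha>B b')"
  and mB_hom_assoc [simp]: "mB (\<alpha>B b) (mB b' b'') = mB (mB b b') (\<alpha>B b'')"
  using alg_B unfolding hom_assoc_alg_def by blast+

lemma lin_\<alpha>A: "lin sA sA \<alpha>A" and lin_\<alpha>B: "lin sB sB \<alpha>B"
  and bilin_mA: "bilin sA sA sA mA" and bilin_mB: "bilin sB sB sB mB"
  using alg_A alg_B unfolding hom_assoc_alg_def by blast+

lemmas linear_simps = lin_apply[OF lin_\<alpha>A] lin_apply[OF lin_\<alpha>B]
  bilin_apply_left[OF bilin_mA] bilin_apply_right[OF bilin_mA]
  bilin_apply_left[OF bilin_mB] bilin_apply_right[OF bilin_mB]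

end

locale hom_twisted_tensor = hom_assoc_pair +
  fixes R
  assumes twisting: "hom_twisting sA mA \<alpha>A sB mB \<alpha>B R"
begin

abbreviation mult_R where
  "mult_R \<equiv> twisted_mult mA mB R"

abbreviation \<alpha>_tensor where
  "\<alpha>_tensor \<equiv> map (\<lambda>(x,y). (\<alpha>A x, \<alpha>B y))"

context
  fixes \<chi>
  assumes \<chi>: "bilin sA sB (*) \<chi>"
begin

lemma pair_sum_R_lin_left:
  "pair_sum \<chi> (R (sB c b + b') a) = c * pair_sum \<chi> (R b a) + pair_sum \<chi> (R b' a)"
proof -
  have "teq2 sA sB (R (sB c b + b') a) (tscale sA c (R b a) @ R b' a)"
    using twisting unfolding hom_twisting_def by blast
  from teq2_pair_sum_eq[OF this \<chi>] show ?thesis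
    by (simp add: pair_sum_tscale[OF \<chi> vector_space_A])
qed

lemma pair_sum_R_lin_right:
  "pair_sum \<chi> (R b (sA c a + a')) = c * pair_sum \<chi> (R b a) + pair_sum \<chi> (R b a')"
proof -
  have "teq2 sA sB (R b (sA c a + a')) (tscale sA c (R b a) @ R b a')"
    using twisting unfolding hom_twisting_def by blast
  from teq2_pair_sum_eq[OF this \<chi>] show ?thesis
    by (simp add: pair_sum_tscale[OF \<chi> vector_space_A])
qed

lemma pair_sum_R_\<alpha>:
  "pair_sum \<chi> (R (\<alpha>B b) (\<alpha>A a)) = pair_sum (\<lambda>x y. \<chi> (\<alpha>A x) (\<alpha>B y)) (R b a)"
proof -
  have "teq2 sA sB (\<alpha>_tensor (R b a)) (R (\<alpha>B b) (\<alpha>A a))"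
    using twisting unfolding hom_twisting_def by blast
  from teq2_pair_sum_eq[OF this \<chi>] show ?thesis by simp
qed

lemma pair_sum_R_mult_A:
  "pair_sum \<chi> (R (\<alpha>B b) (mA a a'))
   = pair_sum (\<lambda>x y. pair_sum (\<lambda>u v. \<chi> (mA x u) (\<alpha>B v)) (R y a')) (R b a)"
proof -
  have "teq2 sA sB (R (\<alpha>B b) (mA a a')) [(mA x u, \<alpha>B v). (x,y) \<leftarrow> R b a, (u,v) \<leftarrow> R y a']"
    using twisting unfolding hom_twisting_def by blast
  from teq2_pair_sum_eq[OF this \<chi>] show ?thesis by simp
qed

lemma pair_sum_R_mult_B:
  "pair_sum \<chi> (R (mB b b') (\<alpha>A a))
   = pair_sum (\<lambda>u v. pair_sum (\<lambda>x y. \<chi> (\<alpha>A x) (mB y v)) (R b u)) (R b' a)"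
proof -
  have "teq2 sA sB (R (mB b b') (\<alpha>A a)) [(\<alpha>A x, mB y v). (u,v) \<leftarrow> R b' a, (x,y) \<leftarrow> R b u]"
    using twisting unfolding hom_twisting_def by blast
  from teq2_pair_sum_eq[OF this \<chi>] show ?thesis by simp
qed

end

lemma mult_R_well_defined:
  assumes "teq2 sA sB xs xs'" "teq2 sA sB ys ys'"
  shows "teq2 sA sB (mult_R xs ys) (mult_R xs' ys')"
  unfolding teq2_iff_pair_sum
proof (intro allI impI)
  fix \<phi> assume \<phi>: "bilin sA sB (*) \<phi>"
  have \<phi>_mult: "bilin sA sB (*) (\<lambda>x y. \<phi> (mA a x) (mB y b'))" for a b'
    unfolding bilin_def lin_def
    by (simp add: linear_simps bilin_apply_left[OF \<phi>] bilin_apply_right[OF \<phi>])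
  define \<Psi> where "\<Psi> = (\<lambda>a b. pair_sum (\<lambda>a' b'. pair_sum (\<lambda>x y. \<phi> (mA a x) (mB y b')) (R b a')) ys)"
  define \<Theta> where "\<Theta> = (\<lambda>a' b'. pair_sum (\<lambda>a b. pair_sum (\<lambda>x y. \<phi> (mA a x) (mB y b')) (R b a')) xs')"
  have "bilin sA sB (*) \<Psi>"
    unfolding bilin_def lin_def \<Psi>_def
    by (simp add: linear_simps bilin_apply_left[OF \<phi>] bilin_apply_right[OF \<phi>]
        pair_sum_R_lin_left[OF \<phi>_mult])
  moreover have "bilin sA sB (*) \<Theta>"
    unfolding bilin_def lin_def \<Theta>_def
    by (simp add: linear_simps bilin_apply_left[OF \<phi>] bilin_apply_right[OF \<phi>]
        pair_sum_R_lin_right[OF \<phi>_mult])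
  ultimately have "pair_sum \<Psi> xs = pair_sum \<Psi> xs'" "pair_sum \<Theta> ys = pair_sum \<Theta> ys'"
    using assms teq2_pair_sum_eq by blast+
  moreover have "pair_sum \<Psi> xs' = pair_sum \<Theta> ys"
    "pair_sum \<Theta> ys' = pair_sum \<phi> (mult_R xs' ys')"
    unfolding \<Psi>_def \<Theta>_def pair_sum_twisted_mult by (rule pair_sum_swap)+
  ultimately show "pair_sum \<phi> (mult_R xs ys) = pair_sum \<phi> (mult_R xs' ys')"
    by (simp add: pair_sum_twisted_mult \<Psi>_def)
qed

lemma \<alpha>_tensor_well_defined:
  assumes "teq2 sA sB xs xs'"
  shows "teq2 sA sB (\<alpha>_tensor xs) (\<alpha>_tensor xs')"
  unfolding teq2_iff_pair_sum
proof (intro allI impI)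
  fix \<phi> assume \<phi>: "bilin sA sB (*) \<phi>"
  have "bilin sA sB (*) (\<lambda>x y. \<phi> (\<alpha>A x) (\<alpha>B y))"
    unfolding bilin_def lin_def
    by (simp add: linear_simps bilin_apply_left[OF \<phi>] bilin_apply_right[OF \<phi>])
  with assms show "pair_sum \<phi> (\<alpha>_tensor xs) = pair_sum \<phi> (\<alpha>_tensor xs')"
    by (simp add: teq2_pair_sum_eq)
qed

lemma \<alpha>_tensor_mult_R: "teq2 sA sB (\<alpha>_tensor (mult_R xs ys)) (mult_R (\<alpha>_tensor xs) (\<alpha>_tensor ys))"
  unfolding teq2_iff_pair_sum
proof (intro allI impI)
  fix \<phi> assume \<phi>: "bilin sA sB (*) \<phi>"
  have "bilin sA sB (*) (\<lambda>x y. \<phi> (mA (\<alpha>A a) x) (mB y (\<alpha>B b')))" for a b'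
    unfolding bilin_def lin_def
    by (simp add: linear_simps bilin_apply_left[OF \<phi>] bilin_apply_right[OF \<phi>])
  then show "pair_sum \<phi> (\<alpha>_tensor (mult_R xs ys)) = pair_sum \<phi> (mult_R (\<alpha>_tensor xs) (\<alpha>_tensor ys))"
    by (simp add: pair_sum_twisted_mult pair_sum_R_\<alpha>)
qed

lemma mult_R_hom_assoc:
  "teq2 sA sB (mult_R (\<alpha>_tensor xs) (mult_R ys zs)) (mult_R (mult_R xs ys) (\<alpha>_tensor zs))"
  unfolding teq2_iff_pair_sum
proof (intro allI impI)
  fix \<phi> assume \<phi>: "bilin sA sB (*) \<phi>"
  have \<phi>_left: "bilin sA sB (*) (\<lambda>u v. \<phi> (mA (\<alpha>A a) u) (mB v (mB y b2)))" for a y b2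
    unfolding bilin_def lin_def
    by (simp add: linear_simps bilin_apply_left[OF \<phi>] bilin_apply_right[OF \<phi>])
  have \<phi>_right: "bilin sA sB (*) (\<lambda>u v. \<phi> (mA (mA a x1) u) (mB v (\<alpha>B b2)))" for a x1 b2
    unfolding bilin_def lin_def
    by (simp add: linear_simps bilin_apply_left[OF \<phi>] bilin_apply_right[OF \<phi>])
  define F where "F = (\<lambda>a x1 u v y b2. \<phi> (mA (mA a x1) (\<alpha>A u)) (mB (mB v y) (\<alpha>B b2)))"
  have "pair_sum \<phi> (mult_R (\<alpha>_tensor xs) (mult_R ys zs))
    = pair_sum (\<lambda>a b. pair_sum (\<lambda>a1 b1. pair_sum (\<lambda>a2 b2. pair_sum (\<lambda>x y.
         pair_sum (\<lambda>x1 y1. pair_sum (\<lambda>u v. F a x1 u v y b2) (R y1 x)) (R b a1)) (R b1 a2)) zs) ys) xs"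
    by (simp add: pair_sum_twisted_mult pair_sum_R_mult_A[OF \<phi>_left] F_def)
  also have "\<dots> = pair_sum (\<lambda>a b. pair_sum (\<lambda>a1 b1. pair_sum (\<lambda>x1 y1. pair_sum (\<lambda>a2 b2. pair_sum (\<lambda>x y.
         pair_sum (\<lambda>u v. F a x1 u v y b2) (R y1 x)) (R b1 a2)) zs) (R b a1)) ys) xs"
  proof (intro pair_sum_cong)
    fix a b a1 b1
    show "pair_sum (\<lambda>a2 b2. pair_sum (\<lambda>x y. pair_sum (\<lambda>x1 y1.
            pair_sum (\<lambda>u v. F a x1 u v y b2) (R y1 x)) (R b a1)) (R b1 a2)) zs
       = pair_sum (\<lambda>x1 y1. pair_sum (\<lambda>a2 b2. pair_sum (\<lambda>x y.
            pair_sum (\<lambda>u v. F a x1 u v y b2) (R y1 x)) (R b1 a2)) zs) (R b a1)"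
      by (subst pair_sum_swap, subst pair_sum_cong[OF pair_sum_swap]) (rule refl)
  qed
  also have "\<dots> = pair_sum \<phi> (mult_R (mult_R xs ys) (\<alpha>_tensor zs))"
    by (simp add: pair_sum_twisted_mult pair_sum_R_mult_B[OF \<phi>_right] F_def)
  finally show "pair_sum \<phi> (mult_R (\<alpha>_tensor xs) (mult_R ys zs))
      = pair_sum \<phi> (mult_R (mult_R xs ys) (\<alpha>_tensor zs))" .
qed

theorem hom_assoc_tensor_alg_twisted: "hom_assoc_tensor_alg sA sB mult_R \<alpha>A \<alpha>B"
  unfolding hom_assoc_tensor_alg_def Let_def
  using mult_R_well_defined \<alpha>_tensor_well_defined \<alpha>_tensor_mult_R mult_R_hom_assoc by blast

end

locale smash_product =
  fixes sH :: "'k::field \<Rightarrow> 'h::ab_group_add \<Rightarrow> 'h"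
    and mH :: "'h \<Rightarrow> 'h \<Rightarrow> 'h" and \<Delta> :: "'h \<Rightarrow> ('h \<times> 'h) list" and \<alpha>H :: "'h \<Rightarrow> 'h"
    and sA :: "'k \<Rightarrow> 'a::ab_group_add \<Rightarrow> 'a"
    and mA :: "'a \<Rightarrow> 'a \<Rightarrow> 'a" and \<alpha>A :: "'a \<Rightarrow> 'a" and act :: "'h \<Rightarrow> 'a \<Rightarrow> 'a"
  assumes bialg: "hom_bialg sH mH \<Delta> \<alpha>H"
    and module_alg: "module_hom_alg sH mH \<Delta> \<alpha>H sA mA \<alpha>A act"
    and bij_\<alpha>H: "bij \<alpha>H" and bij_\<alpha>A: "bij \<alpha>A"

sublocale smash_product \<subseteq> hom_assoc_pair sA mA \<alpha>A sH mH \<alpha>H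
  using bialg module_alg by unfold_locales (simp_all add: hom_bialg_def module_hom_alg_def)

context smash_product
begin

abbreviation R where "R \<equiv> smash_R \<Delta> \<alpha>H \<alpha>A act"

lemma \<Delta>_lin: "teq2 sH sH (\<Delta> (sH c h + h')) (tscale sH c (\<Delta> h) @ \<Delta> h')"
  and \<Delta>_hom_coassoc: "teq3 sH sH sH [(u, v, \<alpha>H y). (x,y) \<leftarrow> \<Delta> h, (u,v) \<leftarrow> \<Delta> x]
                      [(\<alpha>H x, u, v). (x,y) \<leftarrow> \<Delta> h, (u,v) \<leftarrow> \<Delta> y]"
  and \<Delta>_mult: "teq2 sH sH (\<Delta> (mH h h')) [(mH x x', mH y y'). (x,y) \<leftarrow> \<Delta> h, (x',y') \<leftarrow> \<Delta> h']"
  and \<Delta>_\<alpha>: "teq2 sH sH (\<Delta> (\<alpha>H h)) [(\<alpha>H x, \<alpha>H y). (x,y) \<leftarrow> \<Delta> h]"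
  using bialg unfolding hom_bialg_def by blast+

lemma bilin_act: "bilin sH sA sA act"
  and act_\<alpha>: "\<alpha>A (act h a) = act (\<alpha>H h) (\<alpha>A a)"
  and act_act: "act (\<alpha>H h) (act h' a) = act (mH h h') (\<alpha>A a)"
  and act_mult_A: "act (\<alpha>H (\<alpha>H h)) (mA a a') = pair_sum (\<lambda>x y. mA (act x a) (act y a')) (\<Delta> h)"
  using module_alg unfolding module_hom_alg_def pair_sum_def by blast+

lemma inv_\<alpha>H_\<alpha>H [simp]: "inv \<alpha>H (\<alpha>H x) = x" and \<alpha>H_inv_\<alpha>H [simp]: "\<alpha>H (inv \<alpha>H x) = x"
  using bij_\<alpha>H by (simp_all add: bij_is_inj bij_is_surj surj_f_inv_f)

lemma inv_\<alpha>A_\<alpha>A [simp]: "inv \<alpha>A (\<alpha>A a) = a" and \<alpha>A_inv_\<alpha>A [simp]: "\<alpha>A (inv \<alpha>A a) = a"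
  using bij_\<alpha>A by (simp_all add: bij_is_inj bij_is_surj surj_f_inv_f)

lemma inv_\<alpha>H_mult [simp]: "inv \<alpha>H (mH x y) = mH (inv \<alpha>H x) (inv \<alpha>H y)"
  by (metis \<alpha>B_mult inv_\<alpha>H_\<alpha>H \<alpha>H_inv_\<alpha>H)

lemma inv_\<alpha>A_mult [simp]: "inv \<alpha>A (mA a a') = mA (inv \<alpha>A a) (inv \<alpha>A a')"
  by (metis \<alpha>A_mult inv_\<alpha>A_\<alpha>A \<alpha>A_inv_\<alpha>A)

lemma act_mult_H: "act (mH h h') a = act (\<alpha>H h) (act h' (inv \<alpha>A a))"
  using act_act[of h h' "inv \<alpha>A a"] by simp

lemmas smash_linear_simps = linear_simps
  lin_apply[OF lin_inv[OF lin_\<alpha>B bij_\<alpha>H]] lin_apply[OF lin_inv[OF lin_\<alpha>A bij_\<alpha>A]]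
  bilin_apply_left[OF bilin_act] bilin_apply_right[OF bilin_act]

context
  fixes \<psi>
  assumes \<psi>: "bilin sH sH (*) \<psi>"
begin

lemma pair_sum_\<Delta>_\<alpha>: "pair_sum \<psi> (\<Delta> (\<alpha>H h)) = pair_sum (\<lambda>x y. \<psi> (\<alpha>H x) (\<alpha>H y)) (\<Delta> h)"
  using teq2_pair_sum_eq[OF \<Delta>_\<alpha> \<psi>] by simp

lemma pair_sum_\<Delta>_lin: "pair_sum \<psi> (\<Delta> (sH c h + h')) = c * pair_sum \<psi> (\<Delta> h) + pair_sum \<psi> (\<Delta> h')"
  using teq2_pair_sum_eq[OF \<Delta>_lin \<psi>] by (simp add: pair_sum_tscale[OF \<psi> vector_space_B])

lemma pair_sum_\<Delta>_mult:
  "pair_sum \<psi> (\<Delta> (mH h h')) = pair_sum (\<lambda>x y. pair_sum (\<lambda>x' y'. \<psi> (mH x x') (mH y y')) (\<Delta> h')) (\<Delta> h)"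
  using teq2_pair_sum_eq[OF \<Delta>_mult \<psi>] by simp

end

lemma pair_sum_\<Delta>_inv:
  assumes \<psi>: "bilin sH sH (*) \<psi>"
  shows "pair_sum \<psi> (\<Delta> (inv \<alpha>H h)) = pair_sum (\<lambda>x y. \<psi> (inv \<alpha>H x) (inv \<alpha>H y)) (\<Delta> h)"
proof -
  have "bilin sH sH (*) (\<lambda>x y. \<psi> (inv \<alpha>H x) (inv \<alpha>H y))"
    unfolding bilin_def lin_def
    by (simp add: smash_linear_simps bilin_apply_left[OF \<psi>] bilin_apply_right[OF \<psi>])
  from pair_sum_\<Delta>_\<alpha>[OF this, of "inv \<alpha>H h"] show ?thesis by simp
qed

lemma pair_sum_\<Delta>_inv3:
  assumes \<psi>: "bilin sH sH (*) \<psi>"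
  shows "pair_sum \<psi> (\<Delta> (inv \<alpha>H (inv \<alpha>H (inv \<alpha>H h))))
    = pair_sum (\<lambda>x y. \<psi> (inv \<alpha>H (inv \<alpha>H (inv \<alpha>H x))) (inv \<alpha>H (inv \<alpha>H (inv \<alpha>H y)))) (\<Delta> h)"
proof -
  have \<psi>1: "bilin sH sH (*) (\<lambda>x y. \<psi> (inv \<alpha>H x) (inv \<alpha>H y))"
    and \<psi>2: "bilin sH sH (*) (\<lambda>x y. \<psi> (inv \<alpha>H (inv \<alpha>H x)) (inv \<alpha>H (inv \<alpha>H y)))"
    unfolding bilin_def lin_def
    by (simp_all add: smash_linear_simps bilin_apply_left[OF \<psi>] bilin_apply_right[OF \<psi>])
  show ?thesis
    by (simp add: pair_sum_\<Delta>_inv[OF \<psi>] pair_sum_\<Delta>_inv[OF \<psi>1] pair_sum_\<Delta>_inv[OF \<psi>2])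
qed

lemma pair_sum_\<Delta>_hom_coassoc:
  assumes "trilin sH sH sH \<Phi>"
  shows "pair_sum (\<lambda>x y. pair_sum (\<lambda>u v. \<Phi> u v (\<alpha>H y)) (\<Delta> x)) (\<Delta> h)
       = pair_sum (\<lambda>x y. pair_sum (\<lambda>u v. \<Phi> (\<alpha>H x) u v) (\<Delta> y)) (\<Delta> h)"
proof -
  have "sum_list (map (\<lambda>(x,y,z). \<Phi> x y z) [(u, v, \<alpha>H y). (x,y) \<leftarrow> \<Delta> h, (u,v) \<leftarrow> \<Delta> x])
      = sum_list (map (\<lambda>(x,y,z). \<Phi> x y z) [(\<alpha>H x, u, v). (x,y) \<leftarrow> \<Delta> h, (u,v) \<leftarrow> \<Delta> y])"
    using \<Delta>_hom_coassoc[of h] assms unfolding teq3_def by (elim allE[of _ \<Phi>] mp)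
  then show ?thesis by (simp only: sum_list_triples_concat_map)
qed

lemma pair_sum_smash_R:
  "pair_sum \<chi> (R b a) = pair_sum (\<lambda>x y. \<chi> (act (inv \<alpha>H (inv \<alpha>H x)) (inv \<alpha>A a)) (inv \<alpha>H y)) (\<Delta> b)"
  by (simp add: smash_R_def)

context
  fixes \<chi>
  assumes \<chi>: "bilin sA sH (*) \<chi>"
begin

lemma pair_sum_smash_R_lin_left:
  "pair_sum \<chi> (R (sH c b + b') a) = c * pair_sum \<chi> (R b a) + pair_sum \<chi> (R b' a)"
proof -
  have "bilin sH sH (*) (\<lambda>x y. \<chi> (act (inv \<alpha>H (inv \<alpha>H x)) (inv \<alpha>A a)) (inv \<alpha>H y))"
    unfolding bilin_def lin_def
    by (simp add: smash_linear_simps bilin_apply_left[OF \<chi>] bilin_apply_right[OF \<chi>])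
  then show ?thesis by (simp only: pair_sum_smash_R pair_sum_\<Delta>_lin)
qed

lemma pair_sum_smash_R_lin_right:
  "pair_sum \<chi> (R b (sA c a + a')) = c * pair_sum \<chi> (R b a) + pair_sum \<chi> (R b a')"
  by (simp add: pair_sum_smash_R smash_linear_simps bilin_apply_left[OF \<chi>] bilin_apply_right[OF \<chi>])

lemma pair_sum_smash_R_\<alpha>:
  "pair_sum \<chi> (R (\<alpha>H b) (\<alpha>A a)) = pair_sum (\<lambda>x y. \<chi> (\<alpha>A x) (\<alpha>H y)) (R b a)"
proof -
  have "bilin sH sH (*) (\<lambda>x y. \<chi> (act (inv \<alpha>H (inv \<alpha>H x)) a) (inv \<alpha>H y))"
    unfolding bilin_def lin_def
    by (simp add: smash_linear_simps bilin_apply_left[OF \<chi>] bilin_apply_right[OF \<chi>])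
  then show ?thesis by (simp add: pair_sum_smash_R pair_sum_\<Delta>_\<alpha> act_\<alpha>)
qed

text \<open>The module-algebra axiom, with the twists moved onto the coproduct.\<close>
lemma act_inv_mult_A:
  "\<chi> (act (inv \<alpha>H x) (mA a a')) y = pair_sum (\<lambda>p q.
     \<chi> (mA (act (inv \<alpha>H (inv \<alpha>H (inv \<alpha>H p))) a) (act (inv \<alpha>H (inv \<alpha>H (inv \<alpha>H q))) a')) y) (\<Delta> x)"
proof -
  have "bilin sH sH (*) (\<lambda>p q. \<chi> (mA (act p a) (act q a')) y)"
    unfolding bilin_def lin_def
    by (simp add: smash_linear_simps bilin_apply_left[OF \<chi>] bilin_apply_right[OF \<chi>])
  moreover have "act (inv \<alpha>H x) (mA a a')
      = pair_sum (\<lambda>p q. mA (act p a) (act q a')) (\<Delta> (inv \<alpha>H (inv \<alpha>H (inv \<alpha>H x))))"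
    using act_mult_A[of "inv \<alpha>H (inv \<alpha>H (inv \<alpha>H x))" a a'] by simp
  ultimately show ?thesis
    by (simp add: bilin_pair_sum_left[OF \<chi> vector_space_A] pair_sum_\<Delta>_inv3)
qed

lemma pair_sum_smash_R_mult_A:
  "pair_sum \<chi> (R (\<alpha>H b) (mA a a'))
   = pair_sum (\<lambda>x y. pair_sum (\<lambda>u v. \<chi> (mA x u) (\<alpha>H v)) (R y a')) (R b a)"
proof -
  define \<Phi> where "\<Phi> p q r = \<chi> (mA (act (inv \<alpha>H (inv \<alpha>H (inv \<alpha>H p))) (inv \<alpha>A a))
      (act (inv \<alpha>H (inv \<alpha>H (inv \<alpha>H q))) (inv \<alpha>A a'))) (inv \<alpha>H r)" for p q r
  have \<Phi>: "trilin sH sH sH \<Phi>"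
    unfolding trilin_def lin_def \<Phi>_def
    by (simp add: smash_linear_simps bilin_apply_left[OF \<chi>] bilin_apply_right[OF \<chi>])
  have \<chi>_act: "bilin sH sH (*)
      (\<lambda>x y. \<chi> (act (inv \<alpha>H (inv \<alpha>H x)) (mA (inv \<alpha>A a) (inv \<alpha>A a'))) (inv \<alpha>H y))"
    and \<chi>_mult_act: "bilin sH sH (*) (\<lambda>u v. \<chi> (mA (act (inv \<alpha>H (inv \<alpha>H x)) (inv \<alpha>A a))
      (act (inv \<alpha>H (inv \<alpha>H u)) (inv \<alpha>A a'))) (\<alpha>H (inv \<alpha>H v)))" for x
    unfolding bilin_def lin_def
    by (simp_all add: smash_linear_simps bilin_apply_left[OF \<chi>] bilin_apply_right[OF \<chi>])
  \<comment> \<open>\<open>\<alpha>H (inv \<alpha>H v)\<close> is kept unsimplified in \<open>\<chi>_mult_act\<close> so that it matches the expansion of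
    the nested \<open>R\<close> syntactically; the simplifier would otherwise eta-contract it away.\<close>
  have rhs: "pair_sum (\<lambda>x y. pair_sum (\<lambda>u v. \<chi> (mA x u) (\<alpha>H v)) (R y a')) (R b a)
      = pair_sum (\<lambda>x y. pair_sum (\<lambda>u v. \<Phi> (\<alpha>H x) u v) (\<Delta> y)) (\<Delta> b)"
    by (simp only: pair_sum_smash_R pair_sum_\<Delta>_inv[OF \<chi>_mult_act]) (simp add: \<Phi>_def)
  have "pair_sum \<chi> (R (\<alpha>H b) (mA a a'))
      = pair_sum (\<lambda>x y. \<chi> (act (inv \<alpha>H x) (mA (inv \<alpha>A a) (inv \<alpha>A a'))) y) (\<Delta> b)"
    by (simp add: pair_sum_smash_R pair_sum_\<Delta>_\<alpha>[OF \<chi>_act])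
  also have "\<dots> = pair_sum (\<lambda>x y. pair_sum (\<lambda>p q. \<Phi> p q (\<alpha>H y)) (\<Delta> x)) (\<Delta> b)"
    by (simp add: act_inv_mult_A \<Phi>_def)
  also have "\<dots> = pair_sum (\<lambda>x y. pair_sum (\<lambda>u v. \<Phi> (\<alpha>H x) u v) (\<Delta> y)) (\<Delta> b)"
    by (rule pair_sum_\<Delta>_hom_coassoc[OF \<Phi>])
  finally show ?thesis using rhs by simp
qed

lemma pair_sum_smash_R_mult_H:
  "pair_sum \<chi> (R (mH b b') (\<alpha>A a))
   = pair_sum (\<lambda>u v. pair_sum (\<lambda>x y. \<chi> (\<alpha>A x) (mH y v)) (R b u)) (R b' a)"
proof -
  define G where "G x y x' y' = \<chi> (act (inv \<alpha>H x) (act (inv \<alpha>H (inv \<alpha>H x')) (inv \<alpha>A a)))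
      (mH (inv \<alpha>H y) (inv \<alpha>H y'))" for x y x' y'
  have "bilin sH sH (*) (\<lambda>x y. \<chi> (act (inv \<alpha>H (inv \<alpha>H x)) a) (inv \<alpha>H y))"
    unfolding bilin_def lin_def
    by (simp add: smash_linear_simps bilin_apply_left[OF \<chi>] bilin_apply_right[OF \<chi>])
  then have "pair_sum \<chi> (R (mH b b') (\<alpha>A a)) = pair_sum (\<lambda>x y. pair_sum (\<lambda>x' y'. G x y x' y') (\<Delta> b')) (\<Delta> b)"
    by (simp add: pair_sum_smash_R pair_sum_\<Delta>_mult act_mult_H G_def)
  also have "\<dots> = pair_sum (\<lambda>x' y'. pair_sum (\<lambda>x y. G x y x' y') (\<Delta> b)) (\<Delta> b')"
    by (rule pair_sum_swap)
  also have "\<dots> = pair_sum (\<lambda>u v. pair_sum (\<lambda>x y. \<chi> (\<alpha>A x) (mH y v)) (R b u)) (R b' a)"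
    by (simp add: pair_sum_smash_R act_\<alpha> G_def)
  finally show ?thesis .
qed

end

theorem smash_R_hom_twisting: "hom_twisting sA mA \<alpha>A sH mH \<alpha>H R"
  unfolding hom_twisting_def teq2_iff_pair_sum
  by (simp add: pair_sum_tscale vector_space_A pair_sum_smash_R_lin_left pair_sum_smash_R_lin_right
      pair_sum_smash_R_\<alpha> pair_sum_smash_R_mult_A pair_sum_smash_R_mult_H)

end

sublocale smash_product \<subseteq> hom_twisted_tensor sA mA \<alpha>A sH mH \<alpha>H "smash_R \<Delta> \<alpha>H \<alpha>A act"
  by unfold_locales (rule smash_R_hom_twisting)

theorem theorem3p1:
  fixes sH :: "'k::field \<Rightarrow> 'h::ab_group_add \<Rightarrow> 'h"
    and mH :: "'h \<Rightarrow> 'h \<Rightarrow> 'h" and \<Delta>H :: "'h \<Rightarrow> ('h \<times> 'h) list" and \<alpha>H :: "'h \<Rightarrow> 'h"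
    and sA :: "'k \<Rightarrow> 'a::ab_group_add \<Rightarrow> 'a"
    and mA :: "'a \<Rightarrow> 'a \<Rightarrow> 'a" and \<alpha>A :: "'a \<Rightarrow> 'a" and act :: "'h \<Rightarrow> 'a \<Rightarrow> 'a"
  assumes "hom_bialg sH mH \<Delta>H \<alpha>H"
    and "module_hom_alg sH mH \<Delta>H \<alpha>H sA mA \<alpha>A act"
    and "bij \<alpha>H" and "bij \<alpha>A"
  shows "hom_twisting sA mA \<alpha>A sH mH \<alpha>H (smash_R \<Delta>H \<alpha>H \<alpha>A act)
       \<and> hom_assoc_tensor_alg sA sH (twisted_mult mA mH (smash_R \<Delta>H \<alpha>H \<alpha>A act)) \<alpha>A \<alpha>H"
proof -
  interpret smash_product sH mH \<Delta>H \<alpha>H sA mA \<alpha>A act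
    using assms by unfold_locales
  show ?thesis
    using smash_R_hom_twisting hom_assoc_tensor_alg_twisted by blast
qed

end
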